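(* Let $\mathbf a_0\in(0,\infty)^n$ lie in the interior of the domain of $\Phi$. The Frame condition (FC) holds at $\mathbf a_0$ if and only if $\Gamma_{ij}(\mathbf a_0)=0$ for all $i\neq j$ and the ratio $\tilde g_i(\mathbf a_0)/\Gamma_{ii}(\mathbf a_0)$ does not depend on $i\in\{1,\dots,n\}$ (its common value then being $\lambda(\mathbf a_0)$).
   Context: Multi-species zero-range setting: rates $g_1,\dots,g_n$ on $\mathbb Z_+^n$ satisfying the compatibility condition (INV) $g_i(\mathbf k)/g_i(\mathbf k-e_j)=g_j(\mathbf k)/g_j(\mathbf k-e_i)$ ($i\ne j$, $k^i,k^j>0$), so that product invariant measures $\nu_{\mathbf a}$ indexed by density $\mathbf a$ exist (one-site marginal proportional to $\boldsymbol\varphi^{\mathbf k}/\mathbf g!(\mathbf k)$ with fugacity $\boldsymbol\varphi=\Phi(\mathbf a)$). $\tilde g_i(\mathbf a)=E_{\nu_{\mathbf a}}[g_i(\boldsymbol\alpha(0))]$ and $\Gamma(\mathbf a)$ is the covariance matrix of $\boldsymbol\alpha(0)$ under $\nu_{\mathbf a}$. Frame condition (FC) at $\mathbf a_0$: there is $\lambda=\lambda(\mathbf a_0)$ with $\partial_{a^i}\tilde g_i(\mathbf a_0)=\lambda$ for every $i$ and $\partial_{a^j}\tilde g_i(\mathbf a_0)=0$ for all $i\ne j$. *)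

theory Defs
  imports "HOL-Analysis.Analysis"
begin

text \<open>Multi-species zero-range process with n species, indexed by a finite type 'n.
  One-site configurations are k :: 'n \<Rightarrow> nat (an element of Z_+^n).
  Rates: g i k is the rate g_i(k).\<close>

definition dec :: "('n \<Rightarrow> nat) \<Rightarrow> 'n \<Rightarrow> ('n \<Rightarrow> nat)" where
  "dec k j = k(j := k j - 1)"

definition zr_rates :: "('n \<Rightarrow> ('n \<Rightarrow> nat) \<Rightarrow> real) \<Rightarrow> bool" where
  "zr_rates g \<longleftrightarrow> (\<forall>i k. (k i = 0 \<longrightarrow> g i k = 0) \<and> (0 < k i \<longrightarrow> 0 < g i k))"

definition INV :: "('n \<Rightarrow> ('n \<Rightarrow> nat) \<Rightarrow> real) \<Rightarrow> bool" where
  "INV g \<longleftrightarrow> (\<forall>i j k. i \<noteq> j \<and> 0 < k i \<and> 0 < k j \<longrightarrow>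
      g i k / g i (dec k j) = g j k / g j (dec k i))"

definition gfact :: "('n \<Rightarrow> ('n \<Rightarrow> nat) \<Rightarrow> real) \<Rightarrow> ('n \<Rightarrow> nat) \<Rightarrow> real" where
  "gfact g = (THE F. F (\<lambda>_. 0) = 1 \<and> (\<forall>k i. 0 < k i \<longrightarrow> F k = g i k * F (dec k i)))"

definition wt :: "('n::finite \<Rightarrow> ('n \<Rightarrow> nat) \<Rightarrow> real) \<Rightarrow> real^'n \<Rightarrow> ('n \<Rightarrow> nat) \<Rightarrow> real" where
  "wt g phi k = (\<Prod>i\<in>UNIV. (phi $ i) ^ k i) / gfact g k"

definition Zpart :: "('n::finite \<Rightarrow> ('n \<Rightarrow> nat) \<Rightarrow> real) \<Rightarrow> real^'n \<Rightarrow> real" where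
  "Zpart g phi = infsum (wt g phi) UNIV"

definition Efug :: "('n::finite \<Rightarrow> ('n \<Rightarrow> nat) \<Rightarrow> real) \<Rightarrow> real^'n \<Rightarrow> (('n \<Rightarrow> nat) \<Rightarrow> real) \<Rightarrow> real" where
  "Efug g phi f = infsum (\<lambda>k. f k * wt g phi k) UNIV / Zpart g phi"

definition is_fugacity :: "('n::finite \<Rightarrow> ('n \<Rightarrow> nat) \<Rightarrow> real) \<Rightarrow> real^'n \<Rightarrow> real^'n \<Rightarrow> bool" where
  "is_fugacity g a phi \<longleftrightarrow> (\<forall>i. 0 \<le> phi $ i) \<and> wt g phi summable_on UNIV \<and>
     (\<forall>i. (\<lambda>k. real (k i) * wt g phi k) summable_on UNIV) \<and>
     (\<forall>i. Efug g phi (\<lambda>k. real (k i)) = a $ i)"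

definition Phi_dom :: "('n::finite \<Rightarrow> ('n \<Rightarrow> nat) \<Rightarrow> real) \<Rightarrow> (real^'n) set" where
  "Phi_dom g = {a. \<exists>phi. is_fugacity g a phi}"

definition Phi :: "('n::finite \<Rightarrow> ('n \<Rightarrow> nat) \<Rightarrow> real) \<Rightarrow> real^'n \<Rightarrow> real^'n" where
  "Phi g a = (THE phi. is_fugacity g a phi)"

definition Enu :: "('n::finite \<Rightarrow> ('n \<Rightarrow> nat) \<Rightarrow> real) \<Rightarrow> real^'n \<Rightarrow> (('n \<Rightarrow> nat) \<Rightarrow> real) \<Rightarrow> real" where
  "Enu g a f = Efug g (Phi g a) f"

definition gtilde :: "('n::finite \<Rightarrow> ('n \<Rightarrow> nat) \<Rightarrow> real) \<Rightarrow> 'n \<Rightarrow> real^'n \<Rightarrow> real" where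
  "gtilde g i a = Enu g a (g i)"

definition Gamma :: "('n::finite \<Rightarrow> ('n \<Rightarrow> nat) \<Rightarrow> real) \<Rightarrow> real^'n \<Rightarrow> 'n \<Rightarrow> 'n \<Rightarrow> real" where
  "Gamma g a i j = Enu g a (\<lambda>k. real (k i) * real (k j))
      - Enu g a (\<lambda>k. real (k i)) * Enu g a (\<lambda>k. real (k j))"

definition has_partial :: "(real^'n \<Rightarrow> real) \<Rightarrow> 'n::finite \<Rightarrow> real \<Rightarrow> real^'n \<Rightarrow> bool" where
  "has_partial f j D a0 \<longleftrightarrow> ((\<lambda>t. f (a0 + t *\<^sub>R axis j 1)) has_real_derivative D) (at 0)"

definition FC_with :: "('n::finite \<Rightarrow> ('n \<Rightarrow> nat) \<Rightarrow> real) \<Rightarrow> real^'n \<Rightarrow> real \<Rightarrow> bool" where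
  "FC_with g a0 lam \<longleftrightarrow>
     (\<forall>i. has_partial (gtilde g i) i lam a0) \<and>
     (\<forall>i j. i \<noteq> j \<longrightarrow> has_partial (gtilde g i) j 0 a0)"

definition FC :: "('n::finite \<Rightarrow> ('n \<Rightarrow> nat) \<Rightarrow> real) \<Rightarrow> real^'n \<Rightarrow> bool" where
  "FC g a0 \<longleftrightarrow> (\<exists>lam. FC_with g a0 lam)"

end

theory Submission
  imports Defs
begin

text \<open>In log-fugacity coordinates \<open>\<theta> = log \<phi>\<close> the one-site marginal is the exponential family
  with weights \<open>exp \<langle>k, \<theta>\<rangle> / g!(k)\<close>, so the density is its mean map \<open>a = \<tau>(\<theta>)\<close>, whose
  derivative is the covariance \<open>\<Gamma>\<close>; shifting \<open>k \<mapsto> k + e\<^sub>i\<close> shows that the rate \<open>g\<^sub>i\<close> has mean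
  \<open>gtilde\<^sub>i = \<phi>\<^sub>i\<close>.
  Strict convexity of \<open>log Z\<close> makes \<open>\<tau>\<close> injective and \<open>\<Gamma>\<close> positive definite, so by the inverse
  function theorem \<open>\<partial>\<^sub>j gtilde\<^sub>i(a\<^sub>0) = \<phi>\<^sub>i (\<Gamma>\<^sup>-\<^sup>1)\<^sub>i\<^sub>j\<close>. The frame condition with constant \<open>\<lambda>\<close> thus says
  \<open>\<Gamma>\<^sup>-\<^sup>1 = \<lambda> diag(\<phi>)\<^sup>-\<^sup>1\<close>, i.e. \<open>\<Gamma> = diag(\<phi>) / \<lambda>\<close>.
  Differentiability of the moments needs \<open>\<theta>\<^sub>0\<close> in the interior of the natural parameter space; this
  follows from \<open>a\<^sub>0\<close> being interior to the domain of \<open>\<Phi>\<close>, by separating \<open>\<theta>\<^sub>0\<close> from the convex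
  natural domain with a hyperplane and contradicting the monotonicity of \<open>\<tau>\<close>.\<close>

lemma has_sum_diff:
  fixes f g :: "'a \<Rightarrow> 'b::topological_ab_group_add"
  assumes "(f has_sum a) A" "(g has_sum b) A"
  shows "((\<lambda>x. f x - g x) has_sum (a - b)) A"
proof -
  have "((\<lambda>x. - g x) has_sum (- b)) A" using assms(2) by (simp add: has_sum_uminus)
  from has_sum_add[OF assms(1) this] show ?thesis by simp
qed

lemma has_sum_sum:
  fixes f :: "'i \<Rightarrow> 'a \<Rightarrow> 'b::topological_comm_monoid_add"
  assumes "finite I" "\<And>i. i \<in> I \<Longrightarrow> (f i has_sum s i) A"
  shows "((\<lambda>x. \<Sum>i\<in>I. f i x) has_sum (\<Sum>i\<in>I. s i)) A"
  using assms by (induction I rule: finite_induct) (auto intro: has_sum_add)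

lemma summable_on_abs_bound:
  fixes f g :: "'a \<Rightarrow> real"
  assumes "g summable_on A" "\<And>x. x \<in> A \<Longrightarrow> \<bar>f x\<bar> \<le> g x"
  shows "f summable_on A"
proof -
  have "(\<lambda>x. norm (f x)) summable_on A"
    by (rule Infinite_Sum.abs_summable_on_comparison_test'[OF assms(1)]) (use assms(2) in simp)
  then show ?thesis by (rule abs_summable_summable)
qed

lemma has_sum_pos_if_term_pos:
  fixes f :: "'a \<Rightarrow> real"
  assumes "(f has_sum s) A" "\<And>x. x \<in> A \<Longrightarrow> 0 \<le> f x" "a \<in> A" "0 < f a"
  shows "0 < s"
  using has_sum_strict_mono[OF has_sum_0[of A "\<lambda>_. 0"] assms(1), of a] assms(2-) by auto

lemma power_le_const_mult_exp:
  fixes \<epsilon> :: real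
  assumes "0 < \<epsilon>"
  shows "\<exists>C>0. \<forall>x\<ge>0. x ^ p \<le> C * exp (\<epsilon> * x)"
proof (intro exI conjI allI impI)
  show "0 < fact p / \<epsilon> ^ p" using assms by simp
  fix x :: real assume x: "0 \<le> x"
  have ex: "0 \<le> \<epsilon> * x" using assms x by simp
  obtain t where t: "exp (\<epsilon> * x) = (\<Sum>m<Suc p. (\<epsilon> * x) ^ m / fact m)
      + exp t / fact (Suc p) * (\<epsilon> * x) ^ Suc p"
    using Maclaurin_exp_le[of "\<epsilon> * x" "Suc p"] by blast
  have "(\<epsilon> * x) ^ p / fact p \<le> (\<Sum>m<Suc p. (\<epsilon> * x) ^ m / fact m)"
    by (rule member_le_sum[where f = "\<lambda>m. (\<epsilon> * x) ^ m / fact m"]) (use ex in auto)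
  moreover have "0 \<le> exp t / fact (Suc p) * (\<epsilon> * x) ^ Suc p" using ex by simp
  ultimately have "(\<epsilon> * x) ^ p / fact p \<le> exp (\<epsilon> * x)" using t by linarith
  then show "x ^ p \<le> fact p / \<epsilon> ^ p * exp (\<epsilon> * x)"
    using assms by (simp add: field_simps power_mult_distrib)
qed

lemma exp_taylor2_bound:
  fixes x :: real
  shows "\<bar>exp x - 1 - x\<bar> \<le> x\<^sup>2 * exp \<bar>x\<bar>"
proof -
  obtain t where t: "\<bar>t\<bar> \<le> \<bar>x\<bar>" "exp x = (\<Sum>m<2. x ^ m / fact m) + exp t / fact 2 * x\<^sup>2"
    using Maclaurin_exp_le[of x 2] by blast
  have e: "exp x - 1 - x = exp t / 2 * x\<^sup>2" using t(2) by (simp add: numeral_2_eq_2)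
  have "exp t / 2 \<le> exp \<bar>x\<bar>"
    using t(1) exp_gt_zero[of t] exp_le_cancel_iff[of t "\<bar>x\<bar>"] by linarith
  then have "exp t / 2 * x\<^sup>2 \<le> exp \<bar>x\<bar> * x\<^sup>2" by (rule mult_right_mono) simp
  moreover have "\<bar>exp x - 1 - x\<bar> = exp t / 2 * x\<^sup>2" unfolding e by simp
  ultimately show ?thesis by (simp only: mult.commute)
qed

lemma exp_gt_one_plus:
  fixes x :: real
  assumes "x \<noteq> 0"
  shows "1 + x < exp x"
proof -
  obtain t where "exp x = (\<Sum>m<2. x ^ m / fact m) + exp t / fact 2 * x\<^sup>2"
    using Maclaurin_exp_lt[of x 2] assms by auto
  then have "exp x = 1 + x + exp t / 2 * x\<^sup>2" by (simp add: numeral_2_eq_2)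
  moreover have "0 < exp t / 2 * x\<^sup>2" using assms by simp
  ultimately show ?thesis by linarith
qed

lemma has_derivative_of_quadratic_remainder:
  fixes F :: "'a::real_normed_vector \<Rightarrow> real"
  assumes L: "bounded_linear L" and r: "0 < r"
    and rem: "\<And>h. norm h \<le> r \<Longrightarrow> \<bar>F (x + h) - F x - L h\<bar> \<le> B * (norm h)\<^sup>2"
  shows "(F has_derivative L) (at x)"
  unfolding has_derivative_at_alt
proof (intro conjI allI impI L)
  fix e :: real assume e: "0 < e"
  define C where "C = \<bar>B\<bar> + 1"
  have C: "0 < C" "B \<le> C" by (simp_all add: C_def)
  show "\<exists>d>0. \<forall>y. norm (y - x) < d \<longrightarrow> norm (F y - F x - L (y - x)) \<le> e * norm (y - x)"
  proof (intro exI conjI allI impI)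
    show "0 < min r (e / C)" using r e C by simp
    fix y assume y: "norm (y - x) < min r (e / C)"
    define h where "h = y - x"
    have "norm h * C \<le> e" using y C by (simp add: h_def pos_less_divide_eq less_imp_le)
    moreover have "B * norm h \<le> norm h * C" using C by (simp add: mult_right_mono mult.commute)
    ultimately have "B * norm h * norm h \<le> e * norm h" by (intro mult_right_mono) auto
    then have "B * (norm h)\<^sup>2 \<le> e * norm h" by (simp add: power2_eq_square mult.assoc)
    moreover have "\<bar>F (x + h) - F x - L h\<bar> \<le> B * (norm h)\<^sup>2" using y by (intro rem) (simp add: h_def)
    ultimately show "norm (F y - F x - L (y - x)) \<le> e * norm (y - x)" by (simp add: h_def)
  qed
qed

lemma vec_lambda_eq_sum_axis: "(\<chi> i. f i) = (\<Sum>i\<in>UNIV. f i *\<^sub>R axis i (1::real))"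
  by (simp add: vec_eq_iff sum_component axis_def cart_eq_inner_axis[symmetric]
      if_distrib cong: if_cong)

lemma matrix_mult_nth_diagonal_right:
  fixes A D :: "'a::semiring_1^'n::finite^'n"
  assumes "\<And>k. k \<noteq> j \<Longrightarrow> D $ k $ j = 0"
  shows "(A ** D) $ i $ j = A $ i $ j * D $ j $ j"
proof -
  have "(\<Sum>k\<in>UNIV. A $ i $ k * D $ k $ j) = (\<Sum>k\<in>UNIV. if k = j then A $ i $ j * D $ j $ j else 0)"
    using assms by (intro sum.cong) auto
  then show ?thesis by (simp add: matrix_matrix_mult_def)
qed

lemma scaled_inverse_diagonal_iff:
  fixes A B :: "real^'n::finite^'n"
  assumes AB: "A ** B = mat 1" and BA: "B ** A = mat 1" and \<phi>: "\<And>i. 0 < \<phi> i"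
  shows "(\<forall>i j. \<phi> i * B $ i $ j = (if i = j then c else 0)) \<longleftrightarrow>
         (\<forall>i j. i \<noteq> j \<longrightarrow> A $ i $ j = 0) \<and> (\<forall>i. \<phi> i / A $ i $ i = c)"
proof
  assume H: "\<forall>i j. \<phi> i * B $ i $ j = (if i = j then c else 0)"
  have B: "B $ i $ j = (if i = j then c / \<phi> i else 0)" for i j
  proof -
    have "\<phi> i * B $ i $ j = (if i = j then c else 0)" using H by blast
    then show ?thesis using \<phi>[of i] by (cases "i = j") (simp_all add: field_simps)
  qed
  have AB_nth: "A $ i $ j * (c / \<phi> j) = (if i = j then 1 else 0)" for i j
    using AB matrix_mult_nth_diagonal_right[where A = A and D = B and i = i and j = j] B
    by (auto simp: mat_def vec_eq_iff)
  show "(\<forall>i j. i \<noteq> j \<longrightarrow> A $ i $ j = 0) \<and> (\<forall>i. \<phi> i / A $ i $ i = c)"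
  proof (intro conjI allI impI)
    fix i
    have Aii: "A $ i $ i * c = \<phi> i" using AB_nth[of i i] \<phi>[of i] by (simp add: field_simps)
    then have "A $ i $ i \<noteq> 0" using \<phi>[of i] by auto
    with Aii show "\<phi> i / A $ i $ i = c" by (simp add: field_simps)
    fix j assume "i \<noteq> j"
    moreover have "c \<noteq> 0" using AB_nth[of i i] by auto
    ultimately show "A $ i $ j = 0" using AB_nth[of i j] \<phi>[of j] by simp
  qed
next
  assume "(\<forall>i j. i \<noteq> j \<longrightarrow> A $ i $ j = 0) \<and> (\<forall>i. \<phi> i / A $ i $ i = c)"
  then have off: "\<And>i j. i \<noteq> j \<Longrightarrow> A $ i $ j = 0" and ratio: "\<And>i. \<phi> i / A $ i $ i = c" by auto
  have BA_nth: "B $ i $ j * A $ j $ j = (if i = j then 1 else 0)" for i j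
    using BA matrix_mult_nth_diagonal_right[where A = B and D = A and i = i and j = j] off
    by (auto simp: mat_def vec_eq_iff)
  show "\<forall>i j. \<phi> i * B $ i $ j = (if i = j then c else 0)"
  proof (intro allI)
    fix i j
    have "A $ j $ j \<noteq> 0" using BA_nth[of j j] by auto
    then show "\<phi> i * B $ i $ j = (if i = j then c else 0)"
      using BA_nth[of i j] ratio[of i] by (auto simp: field_simps)
  qed
qed

lemma sum_dec:
  fixes k :: "'n::finite \<Rightarrow> nat"
  assumes "0 < k i"
  shows "sum (dec k i) UNIV < sum k UNIV"
proof -
  have "sum k UNIV = k i + sum k (UNIV - {i})" by (simp add: sum.remove[of UNIV i])
  moreover have "sum (dec k i) UNIV = (k i - 1) + sum k (UNIV - {i})"
    by (simp add: sum.remove[of UNIV i] dec_def)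
  ultimately show ?thesis using assms by auto
qed

lemma dec_comm: "dec (dec k i) j = dec (dec k j) i"
  by (auto simp: dec_def fun_eq_iff)

lemma dec_other: "i \<noteq> j \<Longrightarrow> dec k j i = k i"
  by (simp add: dec_def)

text \<open>A concrete recursion for \<open>g!\<close>, removing an arbitrary particle at each step; under
  (INV) the choice of the particle does not matter (\<open>gfact_rec_step\<close>).\<close>

function gfact_rec :: "('n::finite \<Rightarrow> ('n \<Rightarrow> nat) \<Rightarrow> real) \<Rightarrow> ('n \<Rightarrow> nat) \<Rightarrow> real" where
  "gfact_rec g k = (if \<forall>i. k i = 0 then 1
     else g (SOME i. 0 < k i) k * gfact_rec g (dec k (SOME i. 0 < k i)))"
  by auto
termination
proof (relation "Wellfounded.measure (\<lambda>(g, k). sum k UNIV)")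
  fix g :: "'n::finite \<Rightarrow> ('n \<Rightarrow> nat) \<Rightarrow> real" and k :: "'n \<Rightarrow> nat"
  assume "\<not> (\<forall>i. k i = 0)"
  then have "0 < k (SOME i. 0 < k i)" by (metis (mono_tags) gr0I someI_ex)
  then show "((g, dec k (SOME i. 0 < k i)), g, k) \<in> Wellfounded.measure (\<lambda>(g, k). sum k UNIV)"
    using sum_dec by auto
qed auto

declare gfact_rec.simps [simp del]

lemma gfact_rec_zero: "gfact_rec g (\<lambda>_. 0) = 1"
  by (simp add: gfact_rec.simps)

lemma gfact_rec_step:
  assumes zr: "zr_rates g" and inv: "INV g" and ki: "0 < k i"
  shows "gfact_rec g k = g i k * gfact_rec g (dec k i)"
  using ki
proof (induction "sum k UNIV" arbitrary: k i rule: less_induct)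
  case less
  define j where "j = (SOME i. 0 < k i)"
  have nz: "\<not> (\<forall>i. k i = 0)" using less.prems by auto
  then have kj: "0 < k j" unfolding j_def by (metis (mono_tags) gr0I someI_ex)
  have gk: "gfact_rec g k = g j k * gfact_rec g (dec k j)"
    unfolding j_def by (subst gfact_rec.simps) (simp only: if_not_P[OF nz])
  show ?case
  proof (cases "i = j")
    case False
    have 1: "gfact_rec g (dec k j) = g i (dec k j) * gfact_rec g (dec (dec k j) i)"
      using less.hyps[OF sum_dec[of k j, OF kj]] less.prems False by (simp add: dec_other)
    have 2: "gfact_rec g (dec k i) = g j (dec k i) * gfact_rec g (dec (dec k i) j)"
      using less.hyps[OF sum_dec[of k i, OF less.prems]] kj False by (simp add: dec_other)
    have "0 < g i (dec k j)" "0 < g j (dec k i)"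
      using zr less.prems kj False unfolding zr_rates_def by (simp_all add: dec_other)
    moreover have "g i k / g i (dec k j) = g j k / g j (dec k i)"
      using inv False less.prems kj unfolding INV_def by blast
    ultimately have "g i k * g j (dec k i) = g j k * g i (dec k j)"
      by (simp add: field_simps)
    then show ?thesis using gk 1 2 dec_comm[of k i j] by (metis mult.assoc mult.commute)
  qed (use gk in simp)
qed

lemma gfact_rec_pos:
  assumes zr: "zr_rates g" and inv: "INV g"
  shows "0 < gfact_rec g k"
proof (induction "sum k UNIV" arbitrary: k rule: less_induct)
  case less
  show ?case
  proof (cases "\<forall>i. k i = 0")
    case True then show ?thesis by (simp add: gfact_rec.simps)
  next
    case False
    then obtain i where ki: "0 < k i" by auto
    then have "0 < g i k" using zr unfolding zr_rates_def by blast
    then show ?thesis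
      using gfact_rec_step[OF zr inv, of k i] ki less.hyps[OF sum_dec[of k i, OF ki]] by simp
  qed
qed

lemma gfact_eq_gfact_rec:
  assumes zr: "zr_rates g" and inv: "INV g"
  shows "gfact g = gfact_rec g"
  unfolding gfact_def
proof (rule the_equality)
  show "gfact_rec g (\<lambda>_. 0) = 1 \<and> (\<forall>k i. 0 < k i \<longrightarrow> gfact_rec g k = g i k * gfact_rec g (dec k i))"
    using gfact_rec_step[OF zr inv] gfact_rec_zero by blast
next
  fix F assume F: "F (\<lambda>_. 0) = 1 \<and> (\<forall>k i. 0 < k i \<longrightarrow> F k = g i k * F (dec k i))"
  have "F k = gfact_rec g k" for k
  proof (induction "sum k UNIV" arbitrary: k rule: less_induct)
    case less
    show ?case
    proof (cases "\<forall>i. k i = 0")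
      case True
      then have "k = (\<lambda>_. 0)" by auto
      then show ?thesis using F gfact_rec_zero by simp
    next
      case False
      then obtain i where ki: "0 < k i" by auto
      then show ?thesis
        using F gfact_rec_step[OF zr inv, of k i] ki less.hyps[OF sum_dec[of k i, OF ki]] by simp
    qed
  qed
  then show "F = gfact_rec g" by auto
qed

definition kdot :: "('n::finite \<Rightarrow> nat) \<Rightarrow> real^'n \<Rightarrow> real" where
  "kdot k h = (\<Sum>i\<in>UNIV. real (k i) * h $ i)"

definition ksize :: "('n::finite \<Rightarrow> nat) \<Rightarrow> real" where
  "ksize k = (\<Sum>i\<in>UNIV. real (k i))"

definition ones :: "real^'n::finite" where
  "ones = (\<chi> i. 1)"

definition unit_config :: "'n \<Rightarrow> ('n \<Rightarrow> nat)" where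
  "unit_config i = (\<lambda>j. if j = i then 1 else 0)"

definition inc :: "('n \<Rightarrow> nat) \<Rightarrow> 'n \<Rightarrow> ('n \<Rightarrow> nat)" where
  "inc k i = k(i := Suc (k i))"

lemma kdot_add: "kdot k (a + b) = kdot k a + kdot k b"
  by (simp add: kdot_def algebra_simps sum.distrib)

lemma kdot_scaleR: "kdot k (c *\<^sub>R a) = c * kdot k a"
  by (simp add: kdot_def algebra_simps sum_distrib_left)

lemma kdot_ones: "kdot k ones = ksize k"
  by (simp add: kdot_def ksize_def ones_def)

lemma kdot_zero_config: "kdot (\<lambda>_. 0) h = 0"
  by (simp add: kdot_def)

lemma kdot_unit_config: "kdot (unit_config i) h = h $ i"
proof -
  have "(\<lambda>j. real (unit_config i j) * h $ j) = (\<lambda>j. if j = i then h $ i else 0)"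
    by (auto simp: unit_config_def)
  then show ?thesis unfolding kdot_def by (simp only:) simp
qed

lemma kdot_inc: "kdot (inc k i) h = kdot k h + h $ i"
proof -
  have "kdot (inc k i) h = (\<Sum>j\<in>UNIV. real (k j) * h $ j + (if j = i then h $ i else 0))"
    unfolding kdot_def by (rule sum.cong) (auto simp: inc_def algebra_simps)
  then show ?thesis by (simp add: sum.distrib kdot_def)
qed

lemma kdot_mono: "(\<And>i. a $ i \<le> b $ i) \<Longrightarrow> kdot k a \<le> kdot k b"
  unfolding kdot_def by (rule sum_mono) (simp add: mult_left_mono)

lemma abs_kdot_le: "\<bar>kdot k h\<bar> \<le> ksize k * norm h"
proof -
  have "\<bar>kdot k h\<bar> \<le> (\<Sum>i\<in>UNIV. \<bar>real (k i) * h $ i\<bar>)" unfolding kdot_def by (rule sum_abs)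
  also have "\<dots> \<le> (\<Sum>i\<in>UNIV. real (k i) * norm h)"
    by (rule sum_mono) (simp add: abs_mult component_le_norm_cart mult_left_mono)
  finally show ?thesis by (simp add: ksize_def sum_distrib_right)
qed

lemma abs_kdot_le_one_plus: "\<bar>kdot k h\<bar> \<le> (1 + ksize k) * norm h"
  by (rule order_trans[OF abs_kdot_le mult_right_mono]) simp_all

lemma ksize_nonneg: "0 \<le> ksize k"
  by (simp add: ksize_def sum_nonneg)

lemma count_le_one_plus_ksize: "real (k i) \<le> 1 + ksize k"
  using member_le_sum[of i UNIV "\<lambda>i. real (k i)"] by (simp add: ksize_def)

lemma dec_inc: "dec (inc k i) i = k"
  by (simp add: dec_def inc_def)

lemma inc_dec: "0 < k i \<Longrightarrow> inc (dec k i) i = k"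
  by (auto simp: dec_def inc_def fun_eq_iff)

lemma inj_inc: "inj (\<lambda>k. inc k i)"
  by (metis dec_inc injI)

section \<open>The exponential family in log-fugacity coordinates\<close>

locale zero_range_rates =
  fixes g :: "'n::finite \<Rightarrow> ('n \<Rightarrow> nat) \<Rightarrow> real"
  assumes zr: "zr_rates g" and inv: "INV g"
begin

lemma gfact_pos: "0 < gfact g k"
  using gfact_rec_pos[OF zr inv] gfact_eq_gfact_rec[OF zr inv] by simp

lemma gfact_zero_config: "gfact g (\<lambda>_. 0) = 1"
  using gfact_eq_gfact_rec[OF zr inv] gfact_rec_zero by simp

lemma gfact_step: "0 < k i \<Longrightarrow> gfact g k = g i k * gfact g (dec k i)"
  using gfact_rec_step[OF zr inv] gfact_eq_gfact_rec[OF zr inv] by simp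

definition expw :: "real^'n \<Rightarrow> ('n \<Rightarrow> nat) \<Rightarrow> real" where
  "expw \<theta> k = exp (kdot k \<theta>) / gfact g k"

lemma expw_pos: "0 < expw \<theta> k"
  by (simp add: expw_def gfact_pos)

lemma expw_nonneg: "0 \<le> expw \<theta> k"
  using expw_pos less_imp_le by blast

lemma expw_zero_config: "expw \<theta> (\<lambda>_. 0) = 1"
  by (simp add: expw_def gfact_zero_config kdot_zero_config)

lemma expw_add: "expw (\<theta> + h) k = expw \<theta> k * exp (kdot k h)"
  by (simp add: expw_def kdot_add exp_add)

lemma expw_mono: "(\<And>i. a $ i \<le> b $ i) \<Longrightarrow> expw a k \<le> expw b k"
  unfolding expw_def using gfact_pos[of k] kdot_mono[of a b k] by (simp add: divide_right_mono)

definition dom_weight :: "real \<Rightarrow> nat \<Rightarrow> real^'n \<Rightarrow> ('n \<Rightarrow> nat) \<Rightarrow> real" where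
  "dom_weight \<epsilon> p \<theta> k = (1 + ksize k) ^ p * exp (\<epsilon> / 2 * ksize k) * expw \<theta> k"

lemma dom_weight_nonneg: "0 \<le> dom_weight \<epsilon> p \<theta> k"
  unfolding dom_weight_def using ksize_nonneg[of k] expw_nonneg[of \<theta> k] by simp

text \<open>Summability at \<open>\<theta> + \<epsilon>\<one>\<close> makes every polynomial moment at \<open>\<theta>\<close> summable, even with the
  extra factor \<open>exp (\<epsilon>/2 |k|)\<close> that absorbs the perturbations \<open>|h| \<le> \<epsilon>/2\<close>.\<close>

lemma dom_weight_summable:
  assumes eps: "0 < \<epsilon>" and S: "expw (\<theta> + \<epsilon> *\<^sub>R ones) summable_on UNIV"
  shows "dom_weight \<epsilon> p \<theta> summable_on UNIV"
proof -
  obtain C where C: "C > 0" "\<And>y. y \<ge> 0 \<Longrightarrow> y ^ p \<le> C * exp (\<epsilon> / 2 * y)"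
    using power_le_const_mult_exp[of "\<epsilon> / 2" p] eps by auto
  have "dom_weight \<epsilon> p \<theta> k \<le> (C * exp (\<epsilon> / 2)) * expw (\<theta> + \<epsilon> *\<^sub>R ones) k" for k
  proof -
    have "(1 + ksize k) ^ p \<le> C * exp (\<epsilon> / 2 * (1 + ksize k))"
      using C(2)[of "1 + ksize k"] ksize_nonneg[of k] by simp
    then have "dom_weight \<epsilon> p \<theta> k \<le> C * exp (\<epsilon> / 2 * (1 + ksize k)) * exp (\<epsilon> / 2 * ksize k) * expw \<theta> k"
      unfolding dom_weight_def by (intro mult_right_mono expw_nonneg) simp_all
    also have "\<dots> = (C * exp (\<epsilon> / 2)) * (exp (\<epsilon> * ksize k) * expw \<theta> k)"
    proof -
      have "\<epsilon> / 2 * (1 + ksize k) + \<epsilon> / 2 * ksize k = \<epsilon> / 2 + \<epsilon> * ksize k"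
        by (simp add: field_simps)
      then have "exp (\<epsilon> / 2 * (1 + ksize k)) * exp (\<epsilon> / 2 * ksize k) = exp (\<epsilon> / 2) * exp (\<epsilon> * ksize k)"
        by (metis exp_add)
      then show ?thesis by (simp add: mult_ac)
    qed
    also have "\<dots> = (C * exp (\<epsilon> / 2)) * expw (\<theta> + \<epsilon> *\<^sub>R ones) k"
      by (simp add: expw_add kdot_scaleR kdot_ones)
    finally show ?thesis .
  qed
  then show ?thesis
    by (intro summable_on_comparison_test[OF summable_on_cmult_right[OF S]] dom_weight_nonneg)
qed

lemma poly_bounded_summable:
  assumes eps: "0 < \<epsilon>" and S: "expw (\<theta> + \<epsilon> *\<^sub>R ones) summable_on UNIV"
    and f: "\<And>k. \<bar>f k\<bar> \<le> B * (1 + ksize k) ^ p * expw \<theta> k"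
  shows "f summable_on UNIV"
proof (rule summable_on_abs_bound[OF summable_on_cmult_right[OF dom_weight_summable[OF eps S, of p], of "\<bar>B\<bar>"]])
  fix k :: "'n \<Rightarrow> nat"
  have "1 \<le> exp (\<epsilon> / 2 * ksize k)" using ksize_nonneg[of k] eps by simp
  then have "(1 + ksize k) ^ p * expw \<theta> k \<le> dom_weight \<epsilon> p \<theta> k"
    unfolding dom_weight_def using ksize_nonneg[of k] expw_nonneg[of \<theta> k]
    by (simp add: mult.commute mult_left_mono mult_le_cancel_left1)
  moreover have "0 \<le> (1 + ksize k) ^ p * expw \<theta> k"
    using ksize_nonneg[of k] expw_nonneg[of \<theta> k] by simp
  ultimately have "B * ((1 + ksize k) ^ p * expw \<theta> k) \<le> \<bar>B\<bar> * dom_weight \<epsilon> p \<theta> k"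
    by (meson abs_ge_self abs_ge_zero mult_mono)
  then show "\<bar>f k\<bar> \<le> \<bar>B\<bar> * dom_weight \<epsilon> p \<theta> k" using f[of k] by linarith
qed

lemma taylor_term_bound:
  fixes k :: "'n \<Rightarrow> nat"
  assumes h: "norm h \<le> \<epsilon> / 2" and q: "0 \<le> q" "q \<le> (1 + ksize k) ^ p"
  shows "\<bar>q * expw (\<theta> + h) k - q * expw \<theta> k - q * kdot k h * expw \<theta> k\<bar>
           \<le> (norm h)\<^sup>2 * dom_weight \<epsilon> (p + 2) \<theta> k"
proof -
  have "\<bar>kdot k h\<bar> \<le> ksize k * norm h" by (rule abs_kdot_le)
  also have "\<dots> \<le> ksize k * (\<epsilon> / 2)" using h ksize_nonneg[of k] by (rule mult_left_mono)
  finally have ex: "exp \<bar>kdot k h\<bar> \<le> exp (\<epsilon> / 2 * ksize k)" by (simp add: mult.commute)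
  have "\<bar>kdot k h\<bar> \<le> (1 + ksize k) * norm h"
    by (rule abs_kdot_le_one_plus)
  then have sq: "(kdot k h)\<^sup>2 \<le> (1 + ksize k)\<^sup>2 * (norm h)\<^sup>2"
    by (metis abs_ge_zero power2_abs power_mono power_mult_distrib)
  have "\<bar>exp (kdot k h) - 1 - kdot k h\<bar> \<le> (kdot k h)\<^sup>2 * exp \<bar>kdot k h\<bar>"
    by (rule exp_taylor2_bound)
  also have "\<dots> \<le> (1 + ksize k)\<^sup>2 * (norm h)\<^sup>2 * exp (\<epsilon> / 2 * ksize k)"
    using sq ex by (intro mult_mono) auto
  finally have taylor: "\<bar>exp (kdot k h) - 1 - kdot k h\<bar> \<le> (1 + ksize k)\<^sup>2 * (norm h)\<^sup>2 * exp (\<epsilon> / 2 * ksize k)" .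
  have "q * expw (\<theta> + h) k - q * expw \<theta> k - q * kdot k h * expw \<theta> k
      = (q * expw \<theta> k) * (exp (kdot k h) - 1 - kdot k h)"
    by (simp add: expw_add algebra_simps)
  then have "\<bar>q * expw (\<theta> + h) k - q * expw \<theta> k - q * kdot k h * expw \<theta> k\<bar>
      = q * expw \<theta> k * \<bar>exp (kdot k h) - 1 - kdot k h\<bar>"
    by (metis abs_mult abs_of_nonneg expw_nonneg mult_nonneg_nonneg q(1))
  also have "\<dots> \<le> ((1 + ksize k) ^ p * expw \<theta> k) * ((1 + ksize k)\<^sup>2 * (norm h)\<^sup>2 * exp (\<epsilon> / 2 * ksize k))"
    using taylor q expw_nonneg[of \<theta> k] by (intro mult_mono) (auto intro: mult_right_mono)
  also have "\<dots> = (norm h)\<^sup>2 * dom_weight \<epsilon> (p + 2) \<theta> k"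
    unfolding dom_weight_def by (simp add: mult_ac power_add power2_eq_square)
  finally show ?thesis .
qed

lemma weighted_series_remainder:
  assumes eps: "0 < \<epsilon>" and S: "expw (\<theta> + \<epsilon> *\<^sub>R ones) summable_on UNIV"
    and q: "\<And>k. 0 \<le> q k" "\<And>k. q k \<le> (1 + ksize k) ^ p"
    and h: "norm h \<le> \<epsilon> / 2"
  shows "\<bar>infsum (\<lambda>k. q k * expw (\<theta> + h) k) UNIV - infsum (\<lambda>k. q k * expw \<theta> k) UNIV
            - infsum (\<lambda>k. q k * kdot k h * expw \<theta> k) UNIV\<bar>
         \<le> infsum (dom_weight \<epsilon> (p + 2) \<theta>) UNIV * (norm h)\<^sup>2"
proof -
  define R where "R k = q k * expw (\<theta> + h) k - q k * expw \<theta> k - q k * kdot k h * expw \<theta> k" for k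
  have sh: "(\<lambda>k. q k * expw (\<theta> + h) k) summable_on UNIV"
  proof (rule summable_on_abs_bound[OF dom_weight_summable[OF eps S, of p]])
    fix k
    have "\<bar>kdot k h\<bar> \<le> \<epsilon> / 2 * ksize k"
      using abs_kdot_le[of k h] mult_left_mono[OF h ksize_nonneg[of k]] by (simp add: mult.commute)
    then have "exp (kdot k h) \<le> exp (\<epsilon> / 2 * ksize k)" by simp
    then have "q k * expw \<theta> k * exp (kdot k h) \<le> (1 + ksize k) ^ p * expw \<theta> k * exp (\<epsilon> / 2 * ksize k)"
      using q[of k] expw_nonneg[of \<theta> k] ksize_nonneg[of k] by (intro mult_mono) auto
    then show "\<bar>q k * expw (\<theta> + h) k\<bar> \<le> dom_weight \<epsilon> p \<theta> k"
      unfolding dom_weight_def expw_add using q[of k] expw_nonneg[of \<theta> k]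
      by (simp add: abs_mult mult_ac)
  qed
  have s0: "(\<lambda>k. q k * expw \<theta> k) summable_on UNIV"
    by (rule poly_bounded_summable[OF eps S, of _ 1 p]) (use q expw_nonneg in \<open>simp add: mult_right_mono\<close>)
  have s1: "(\<lambda>k. q k * kdot k h * expw \<theta> k) summable_on UNIV"
  proof (rule poly_bounded_summable[OF eps S, of _ "norm h" "p + 1"])
    fix k
    have "\<bar>kdot k h\<bar> \<le> (1 + ksize k) * norm h"
      by (rule abs_kdot_le_one_plus)
    then have "q k * \<bar>kdot k h\<bar> * expw \<theta> k \<le> (1 + ksize k) ^ p * ((1 + ksize k) * norm h) * expw \<theta> k"
      using q[of k] expw_nonneg[of \<theta> k] by (intro mult_right_mono mult_mono) auto
    then show "\<bar>q k * kdot k h * expw \<theta> k\<bar> \<le> norm h * (1 + ksize k) ^ (p + 1) * expw \<theta> k"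
      using q[of k] expw_nonneg[of \<theta> k] by (simp add: abs_mult power_add mult_ac)
  qed
  have hR: "(R has_sum (infsum (\<lambda>k. q k * expw (\<theta> + h) k) UNIV - infsum (\<lambda>k. q k * expw \<theta> k) UNIV
      - infsum (\<lambda>k. q k * kdot k h * expw \<theta> k) UNIV)) UNIV"
    unfolding R_def by (intro has_sum_diff has_sum_infsum sh s0 s1)
  have W: "(\<lambda>k. (norm h)\<^sup>2 * dom_weight \<epsilon> (p + 2) \<theta> k) summable_on UNIV"
    by (rule summable_on_cmult_right[OF dom_weight_summable[OF eps S]])
  have "norm (infsum (\<lambda>k. q k * expw (\<theta> + h) k) UNIV - infsum (\<lambda>k. q k * expw \<theta> k) UNIV
      - infsum (\<lambda>k. q k * kdot k h * expw \<theta> k) UNIV)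
      \<le> infsum (\<lambda>k. (norm h)\<^sup>2 * dom_weight \<epsilon> (p + 2) \<theta> k) UNIV"
    by (rule norm_infsum_le[OF hR has_sum_infsum[OF W]])
       (unfold R_def real_norm_def, use q in \<open>intro taylor_term_bound h\<close>)
  then show ?thesis by (simp add: infsum_cmult_right' mult.commute)
qed

lemma weighted_series_has_derivative:
  assumes eps: "0 < \<epsilon>" and S: "expw (\<theta> + \<epsilon> *\<^sub>R ones) summable_on UNIV"
    and q: "\<And>k. 0 \<le> q k" "\<And>k. q k \<le> (1 + ksize k) ^ p"
  shows "((\<lambda>x. infsum (\<lambda>k. q k * expw x k) UNIV) has_derivative
          (\<lambda>h. \<Sum>j\<in>UNIV. h $ j * infsum (\<lambda>k. q k * real (k j) * expw \<theta> k) UNIV)) (at \<theta>)"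
proof (rule has_derivative_of_quadratic_remainder)
  show "bounded_linear (\<lambda>h. \<Sum>j\<in>UNIV. h $ j * infsum (\<lambda>k. q k * real (k j) * expw \<theta> k) UNIV)"
    by (intro bounded_linear_sum bounded_linear_compose[OF bounded_linear_mult_left bounded_linear_vec_nth])
  have sj: "(\<lambda>k. q k * real (k j) * expw \<theta> k) summable_on UNIV" for j
  proof (rule poly_bounded_summable[OF eps S, of _ 1 "p + 1"])
    fix k
    have "q k * real (k j) * expw \<theta> k \<le> (1 + ksize k) ^ p * (1 + ksize k) * expw \<theta> k"
      using q[of k] expw_nonneg[of \<theta> k] count_le_one_plus_ksize[of k j]
      by (intro mult_right_mono mult_mono) auto
    then show "\<bar>q k * real (k j) * expw \<theta> k\<bar> \<le> 1 * (1 + ksize k) ^ (p + 1) * expw \<theta> k"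
      using q[of k] expw_nonneg[of \<theta> k] by (simp add: abs_mult power_add mult_ac)
  qed
  fix h :: "real^'n" assume h: "norm h \<le> \<epsilon> / 2"
  have "(\<Sum>j\<in>UNIV. h $ j * infsum (\<lambda>k. q k * real (k j) * expw \<theta> k) UNIV)
      = infsum (\<lambda>k. \<Sum>j\<in>UNIV. h $ j * (q k * real (k j) * expw \<theta> k)) UNIV"
    by (rule infsumI[symmetric], intro has_sum_sum has_sum_cmult_right has_sum_infsum sj) simp
  also have "\<dots> = infsum (\<lambda>k. q k * kdot k h * expw \<theta> k) UNIV"
    by (simp add: kdot_def sum_distrib_left sum_distrib_right mult_ac)
  finally show "\<bar>infsum (\<lambda>k. q k * expw (\<theta> + h) k) UNIV - infsum (\<lambda>k. q k * expw \<theta> k) UNIV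
      - (\<Sum>j\<in>UNIV. h $ j * infsum (\<lambda>k. q k * real (k j) * expw \<theta> k) UNIV)\<bar>
      \<le> infsum (dom_weight \<epsilon> (p + 2) \<theta>) UNIV * (norm h)\<^sup>2"
    using weighted_series_remainder[OF eps S q h] by simp
qed (use eps in simp)

section \<open>Moments and the mean map\<close>

definition Z :: "real^'n \<Rightarrow> real" where
  "Z \<theta> = infsum (expw \<theta>) UNIV"

definition mom1 :: "'n \<Rightarrow> real^'n \<Rightarrow> real" where
  "mom1 i \<theta> = infsum (\<lambda>k. real (k i) * expw \<theta> k) UNIV"

definition mom2 :: "'n \<Rightarrow> 'n \<Rightarrow> real^'n \<Rightarrow> real" where
  "mom2 i j \<theta> = infsum (\<lambda>k. real (k i) * real (k j) * expw \<theta> k) UNIV"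

definition mean :: "real^'n \<Rightarrow> 'n \<Rightarrow> real" where
  "mean \<theta> i = mom1 i \<theta> / Z \<theta>"

definition cov :: "real^'n \<Rightarrow> 'n \<Rightarrow> 'n \<Rightarrow> real" where
  "cov \<theta> i j = mom2 i j \<theta> / Z \<theta> - mean \<theta> i * mean \<theta> j"

definition mean_vec :: "real^'n \<Rightarrow> real^'n" where
  "mean_vec \<theta> = (\<chi> i. mean \<theta> i)"

definition Cov :: "real^'n \<Rightarrow> real^'n^'n" where
  "Cov \<theta> = (\<chi> i j. cov \<theta> i j)"

definition finite_moments :: "real^'n \<Rightarrow> bool" where
  "finite_moments \<theta> \<longleftrightarrow> expw \<theta> summable_on UNIV \<and>
     (\<forall>i. (\<lambda>k. real (k i) * expw \<theta> k) summable_on UNIV)"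

text \<open>Since \<open>expw\<close> is monotone in \<open>\<theta>\<close>, this is the interior of the natural parameter space
  \<open>{\<theta>. expw \<theta> summable_on UNIV}\<close>.\<close>

definition reg_dom :: "(real^'n) set" where
  "reg_dom = {\<theta>. \<exists>\<epsilon>>0. expw (\<theta> + \<epsilon> *\<^sub>R ones) summable_on UNIV}"

lemma has_sum_Z: "expw \<theta> summable_on UNIV \<Longrightarrow> (expw \<theta> has_sum Z \<theta>) UNIV"
  unfolding Z_def by simp

lemma Z_pos: "expw \<theta> summable_on UNIV \<Longrightarrow> 0 < Z \<theta>"
  by (rule has_sum_pos_if_term_pos[OF has_sum_Z, of _ "\<lambda>_. 0"])
     (simp_all add: expw_nonneg expw_zero_config)

lemma reg_domE:
  assumes "\<theta> \<in> reg_dom"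
  obtains \<epsilon> where "0 < \<epsilon>" "expw (\<theta> + \<epsilon> *\<^sub>R ones) summable_on UNIV"
  using assms unfolding reg_dom_def by auto

lemma finite_moments_if_reg_dom:
  assumes "\<theta> \<in> reg_dom"
  shows "finite_moments \<theta>"
proof -
  obtain \<epsilon> where eps: "0 < \<epsilon>" and S: "expw (\<theta> + \<epsilon> *\<^sub>R ones) summable_on UNIV"
    using assms by (rule reg_domE)
  have "expw \<theta> summable_on UNIV"
    by (rule poly_bounded_summable[OF eps S, of _ 1 0]) (simp add: expw_nonneg)
  moreover have "(\<lambda>k. real (k i) * expw \<theta> k) summable_on UNIV" for i
    by (rule poly_bounded_summable[OF eps S, of _ 1 1])
       (use count_le_one_plus_ksize[of _ i] expw_nonneg in \<open>auto intro!: mult_right_mono\<close>)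
  ultimately show ?thesis unfolding finite_moments_def by auto
qed

lemma open_reg_dom: "open reg_dom"
  unfolding open_dist
proof (intro ballI)
  fix \<theta> assume "\<theta> \<in> reg_dom"
  then obtain \<epsilon> where eps: "0 < \<epsilon>" and S: "expw (\<theta> + \<epsilon> *\<^sub>R ones) summable_on UNIV"
    by (rule reg_domE)
  show "\<exists>e>0. \<forall>y. dist y \<theta> < e \<longrightarrow> y \<in> reg_dom"
  proof (intro exI conjI allI impI)
    show "0 < \<epsilon> / 2" using eps by simp
    fix y assume y: "dist y \<theta> < \<epsilon> / 2"
    have "(y + (\<epsilon> / 2) *\<^sub>R ones) $ i \<le> (\<theta> + \<epsilon> *\<^sub>R ones) $ i" for i
      using component_le_norm_cart[of "y - \<theta>" i] y by (simp add: dist_norm ones_def)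
    then have "expw (y + (\<epsilon> / 2) *\<^sub>R ones) summable_on UNIV"
      by (intro summable_on_comparison_test[OF S] expw_mono expw_nonneg)
    then show "y \<in> reg_dom" unfolding reg_dom_def using eps by (intro CollectI exI[of _ "\<epsilon> / 2"]) auto
  qed
qed

lemma Z_has_derivative:
  assumes "\<theta> \<in> reg_dom"
  shows "(Z has_derivative (\<lambda>h. \<Sum>j\<in>UNIV. h $ j * mom1 j \<theta>)) (at \<theta>)"
proof -
  obtain \<epsilon> where eps: "0 < \<epsilon>" and S: "expw (\<theta> + \<epsilon> *\<^sub>R ones) summable_on UNIV"
    using assms by (rule reg_domE)
  show ?thesis
    using weighted_series_has_derivative[OF eps S, of "\<lambda>_. 1" 0] unfolding Z_def mom1_def by simp
qed

lemma mom1_has_derivative: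
  assumes "\<theta> \<in> reg_dom"
  shows "(mom1 i has_derivative (\<lambda>h. \<Sum>j\<in>UNIV. h $ j * mom2 i j \<theta>)) (at \<theta>)"
proof -
  obtain \<epsilon> where eps: "0 < \<epsilon>" and S: "expw (\<theta> + \<epsilon> *\<^sub>R ones) summable_on UNIV"
    using assms by (rule reg_domE)
  have "((\<lambda>x. infsum (\<lambda>k. real (k i) * expw x k) UNIV) has_derivative
      (\<lambda>h. \<Sum>j\<in>UNIV. h $ j * infsum (\<lambda>k. real (k i) * real (k j) * expw \<theta> k) UNIV)) (at \<theta>)"
    by (rule weighted_series_has_derivative[OF eps S, where p = 1]) (use count_le_one_plus_ksize in auto)
  then show ?thesis unfolding mom1_def mom2_def by (simp add: fun_eq_iff)
qed

lemma mean_has_derivative: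
  assumes "\<theta> \<in> reg_dom"
  shows "((\<lambda>x. mean x i) has_derivative (\<lambda>h. \<Sum>j\<in>UNIV. cov \<theta> i j * h $ j)) (at \<theta>)"
proof -
  have Z0: "Z \<theta> \<noteq> 0"
    using Z_pos finite_moments_if_reg_dom[OF assms] unfolding finite_moments_def by fastforce
  have "((\<lambda>x. mom1 i x / Z x) has_derivative
     (\<lambda>h. ((\<Sum>j\<in>UNIV. h $ j * mom2 i j \<theta>) * Z \<theta> - mom1 i \<theta> * (\<Sum>j\<in>UNIV. h $ j * mom1 j \<theta>))
           / (Z \<theta> * Z \<theta>))) (at \<theta>)"
    by (rule has_derivative_divide'[OF mom1_has_derivative[OF assms] Z_has_derivative[OF assms] Z0])
  moreover have "((\<Sum>j\<in>UNIV. h $ j * mom2 i j \<theta>) * Z \<theta> - mom1 i \<theta> * (\<Sum>j\<in>UNIV. h $ j * mom1 j \<theta>))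
      / (Z \<theta> * Z \<theta>) = (\<Sum>j\<in>UNIV. cov \<theta> i j * h $ j)" for h
    using Z0 unfolding cov_def mean_def
    by (simp add: field_simps sum_distrib_left sum_distrib_right sum_divide_distrib
        sum_subtractf[symmetric])
  ultimately show ?thesis unfolding mean_def by simp
qed

lemma mean_vec_has_derivative:
  assumes "\<theta> \<in> reg_dom"
  shows "(mean_vec has_derivative (\<lambda>h. Cov \<theta> *v h)) (at \<theta>)"
proof -
  have "((\<lambda>x. \<Sum>i\<in>UNIV. mean x i *\<^sub>R axis i (1::real)) has_derivative
      (\<lambda>h. \<Sum>i\<in>UNIV. (\<Sum>j\<in>UNIV. cov \<theta> i j * h $ j) *\<^sub>R axis i 1)) (at \<theta>)"
    by (intro has_derivative_sum has_derivative_scaleR_left mean_has_derivative[OF assms])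
  then show ?thesis
    unfolding mean_vec_def Cov_def matrix_vector_mult_def
    by (simp only: vec_lambda_eq_sum_axis[symmetric] vec_lambda_beta)
qed

lemma continuous_on_mean_vec: "continuous_on reg_dom mean_vec"
  by (rule continuous_at_imp_continuous_on)
     (use mean_vec_has_derivative has_derivative_continuous in blast)

section \<open>Injectivity and nondegeneracy of the mean map\<close>

lemma has_sum_kdot_expw:
  assumes "finite_moments \<theta>"
  shows "((\<lambda>k. kdot k v * expw \<theta> k) has_sum (\<Sum>i\<in>UNIV. v $ i * mom1 i \<theta>)) UNIV"
proof -
  have "(\<lambda>k. kdot k v * expw \<theta> k) = (\<lambda>k. \<Sum>i\<in>UNIV. v $ i * (real (k i) * expw \<theta> k))"
    by (simp add: kdot_def fun_eq_iff sum_distrib_left mult_ac)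
  then show ?thesis
    using assms unfolding finite_moments_def mom1_def
    by (simp only:) (intro has_sum_sum has_sum_cmult_right has_sum_infsum, auto)
qed

lemma mean_pos:
  assumes "finite_moments \<theta>"
  shows "0 < mean \<theta> i"
proof -
  have s: "(\<lambda>k. real (k i) * expw \<theta> k) summable_on UNIV" and s0: "expw \<theta> summable_on UNIV"
    using assms unfolding finite_moments_def by auto
  have "0 < mom1 i \<theta>" unfolding mom1_def
    by (rule has_sum_pos_if_term_pos[OF has_sum_infsum[OF s], of "unit_config i"])
       (auto simp: expw_pos expw_nonneg unit_config_def)
  then show ?thesis unfolding mean_def using Z_pos[OF s0] by simp
qed

text \<open>Strict convexity of \<open>log Z\<close> along \<open>\<theta>\<^sub>1 - \<theta>\<^sub>2\<close>: the summand \<open>T k\<close> below is the gap in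
  \<open>exp y \<ge> exp \<mu> (1 + y - \<mu>)\<close> at \<open>y = kdot k v\<close>; it is strictly positive at \<open>k = 0\<close> unless
  \<open>\<mu> = 0\<close>, and at a unit configuration otherwise.\<close>

lemma Z_gt_tangent:
  assumes fm: "finite_moments \<theta>\<^sub>2" and s1: "expw \<theta>\<^sub>1 summable_on UNIV" and ne: "\<theta>\<^sub>1 \<noteq> \<theta>\<^sub>2"
  shows "Z \<theta>\<^sub>2 * exp (\<Sum>i\<in>UNIV. (\<theta>\<^sub>1 - \<theta>\<^sub>2) $ i * mean \<theta>\<^sub>2 i) < Z \<theta>\<^sub>1"
proof -
  define v where "v = \<theta>\<^sub>1 - \<theta>\<^sub>2"
  define \<mu> where "\<mu> = (\<Sum>i\<in>UNIV. v $ i * mean \<theta>\<^sub>2 i)"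
  define T where "T k = expw \<theta>\<^sub>1 k - exp \<mu> * ((1 - \<mu>) * expw \<theta>\<^sub>2 k + kdot k v * expw \<theta>\<^sub>2 k)" for k
  have s2: "expw \<theta>\<^sub>2 summable_on UNIV" using fm unfolding finite_moments_def by auto
  have Z2: "0 < Z \<theta>\<^sub>2" by (rule Z_pos[OF s2])
  have "((\<lambda>k. kdot k v * expw \<theta>\<^sub>2 k) has_sum (\<mu> * Z \<theta>\<^sub>2)) UNIV"
    using has_sum_kdot_expw[OF fm, of v] Z2 unfolding \<mu>_def mean_def
    by (simp add: sum_distrib_right)
  then have "(T has_sum (Z \<theta>\<^sub>1 - exp \<mu> * ((1 - \<mu>) * Z \<theta>\<^sub>2 + \<mu> * Z \<theta>\<^sub>2))) UNIV"
    unfolding T_def by (intro has_sum_diff has_sum_cmult_right has_sum_add has_sum_Z s1 s2)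
  then have hT: "(T has_sum (Z \<theta>\<^sub>1 - exp \<mu> * Z \<theta>\<^sub>2)) UNIV" by (simp add: algebra_simps)
  have T_eq: "T k = expw \<theta>\<^sub>2 k * (exp (kdot k v) - exp \<mu> * (1 + kdot k v - \<mu>))" for k
    using expw_add[of \<theta>\<^sub>2 v k] unfolding T_def v_def by (simp add: algebra_simps)
  have T_nonneg: "0 \<le> T k" for k
  proof -
    have "exp \<mu> * (1 + (kdot k v - \<mu>)) \<le> exp \<mu> * exp (kdot k v - \<mu>)" by simp
    also have "\<dots> = exp (kdot k v)" by (simp flip: exp_add)
    finally show ?thesis unfolding T_eq by (simp add: expw_nonneg add_diff_eq)
  qed
  obtain k0 where k0: "0 < T k0"
  proof (cases "\<mu> = 0")
    case False
    then have "exp \<mu> * (1 - \<mu>) < exp \<mu> * exp (- \<mu>)" using exp_gt_one_plus[of "- \<mu>"] by simp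
    then have "0 < T (\<lambda>_. 0)" unfolding T_eq by (simp add: expw_zero_config kdot_zero_config flip: exp_add)
    then show ?thesis by (rule that)
  next
    case True
    obtain i where vi: "v $ i \<noteq> 0" using ne unfolding v_def by (auto simp: vec_eq_iff)
    then have "0 < T (unit_config i)"
      unfolding T_eq True using exp_gt_one_plus[OF vi] expw_pos[of \<theta>\<^sub>2 "unit_config i"]
      by (simp add: kdot_unit_config)
    then show ?thesis by (rule that)
  qed
  have "0 < Z \<theta>\<^sub>1 - exp \<mu> * Z \<theta>\<^sub>2"
    by (rule has_sum_pos_if_term_pos[of T UNIV _ k0, OF hT]) (simp_all add: T_nonneg k0)
  then show ?thesis unfolding \<mu>_def v_def by (simp add: mult.commute)
qed

lemma mean_strict_mono:
  assumes fm1: "finite_moments \<theta>\<^sub>1" and fm2: "finite_moments \<theta>\<^sub>2" and ne: "\<theta>\<^sub>1 \<noteq> \<theta>\<^sub>2"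
  shows "0 < (\<Sum>i\<in>UNIV. (\<theta>\<^sub>1 - \<theta>\<^sub>2) $ i * (mean \<theta>\<^sub>1 i - mean \<theta>\<^sub>2 i))"
proof -
  define a where "a = (\<Sum>i\<in>UNIV. (\<theta>\<^sub>1 - \<theta>\<^sub>2) $ i * mean \<theta>\<^sub>2 i)"
  define b where "b = (\<Sum>i\<in>UNIV. (\<theta>\<^sub>2 - \<theta>\<^sub>1) $ i * mean \<theta>\<^sub>1 i)"
  have s1: "expw \<theta>\<^sub>1 summable_on UNIV" and s2: "expw \<theta>\<^sub>2 summable_on UNIV"
    using fm1 fm2 unfolding finite_moments_def by auto
  have A: "Z \<theta>\<^sub>2 * exp a < Z \<theta>\<^sub>1" unfolding a_def by (rule Z_gt_tangent[OF fm2 s1 ne])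
  have B: "Z \<theta>\<^sub>1 * exp b < Z \<theta>\<^sub>2" unfolding b_def by (rule Z_gt_tangent[OF fm1 s2 ne[symmetric]])
  have "Z \<theta>\<^sub>1 * exp b * exp a < Z \<theta>\<^sub>2 * exp a"
    by (rule mult_strict_right_mono[OF B exp_gt_zero])
  also note A
  finally have "Z \<theta>\<^sub>1 * exp (b + a) < Z \<theta>\<^sub>1 * 1" by (simp add: exp_add mult.assoc)
  then have "b + a < 0" using Z_pos[OF s1] by simp
  moreover have "b + a = - (\<Sum>i\<in>UNIV. (\<theta>\<^sub>1 - \<theta>\<^sub>2) $ i * (mean \<theta>\<^sub>1 i - mean \<theta>\<^sub>2 i))"
    unfolding a_def b_def by (simp add: algebra_simps sum.distrib[symmetric] sum_negf[symmetric])
  ultimately show ?thesis by linarith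
qed

lemma mean_inj:
  assumes "finite_moments \<theta>\<^sub>1" "finite_moments \<theta>\<^sub>2" "\<And>i. mean \<theta>\<^sub>1 i = mean \<theta>\<^sub>2 i"
  shows "\<theta>\<^sub>1 = \<theta>\<^sub>2"
  using mean_strict_mono[OF assms(1,2)] assms(3) by force

lemma has_sum_kdot_square_expw:
  assumes "\<theta> \<in> reg_dom"
  shows "((\<lambda>k. (kdot k x)\<^sup>2 * expw \<theta> k) has_sum
           (\<Sum>i\<in>UNIV. \<Sum>j\<in>UNIV. x $ i * x $ j * mom2 i j \<theta>)) UNIV"
proof -
  obtain \<epsilon> where eps: "0 < \<epsilon>" and S: "expw (\<theta> + \<epsilon> *\<^sub>R ones) summable_on UNIV"
    using assms by (rule reg_domE)
  have s2: "(\<lambda>k. real (k i) * real (k j) * expw \<theta> k) summable_on UNIV" for i j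
  proof (rule poly_bounded_summable[OF eps S, of _ 1 2])
    fix k :: "'n \<Rightarrow> nat"
    have "real (k i) * real (k j) \<le> (1 + ksize k) * (1 + ksize k)"
      using count_le_one_plus_ksize[of k i] count_le_one_plus_ksize[of k j] by (intro mult_mono) auto
    then show "\<bar>real (k i) * real (k j) * expw \<theta> k\<bar> \<le> 1 * (1 + ksize k) ^ 2 * expw \<theta> k"
      using expw_nonneg[of \<theta> k] by (simp add: power2_eq_square mult_right_mono)
  qed
  have "(kdot k x)\<^sup>2 * expw \<theta> k
      = (\<Sum>i\<in>UNIV. \<Sum>j\<in>UNIV. x $ i * x $ j * (real (k i) * real (k j) * expw \<theta> k))" for k
  proof -
    have "(kdot k x)\<^sup>2 = (\<Sum>i\<in>UNIV. \<Sum>j\<in>UNIV. (real (k i) * x $ i) * (real (k j) * x $ j))"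
      by (simp add: kdot_def power2_eq_square sum_product)
    then show ?thesis by (simp add: sum_distrib_left mult_ac)
  qed
  moreover have "((\<lambda>k. \<Sum>i\<in>UNIV. \<Sum>j\<in>UNIV. x $ i * x $ j * (real (k i) * real (k j) * expw \<theta> k))
      has_sum (\<Sum>i\<in>UNIV. \<Sum>j\<in>UNIV. x $ i * x $ j * mom2 i j \<theta>)) UNIV"
    unfolding mom2_def by (intro has_sum_sum has_sum_cmult_right has_sum_infsum s2) auto
  ultimately show ?thesis by simp
qed

lemma has_sum_centered_square:
  fixes x :: "real^'n"
  assumes "\<theta> \<in> reg_dom"
  defines "\<mu> \<equiv> \<Sum>i\<in>UNIV. x $ i * mean \<theta> i"
  shows "((\<lambda>k. (kdot k x - \<mu>)\<^sup>2 * expw \<theta> k) has_sum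
           (Z \<theta> * (\<Sum>i\<in>UNIV. \<Sum>j\<in>UNIV. x $ i * x $ j * cov \<theta> i j))) UNIV"
proof -
  have fm: "finite_moments \<theta>" by (rule finite_moments_if_reg_dom[OF assms(1)])
  then have s0: "expw \<theta> summable_on UNIV" unfolding finite_moments_def by auto
  have Z0: "0 < Z \<theta>" by (rule Z_pos[OF s0])
  define X where "X = (\<Sum>i\<in>UNIV. \<Sum>j\<in>UNIV. x $ i * x $ j * mom2 i j \<theta>)"
  have h2: "((\<lambda>k. (kdot k x)\<^sup>2 * expw \<theta> k) has_sum X) UNIV"
    unfolding X_def by (rule has_sum_kdot_square_expw[OF assms(1)])
  have h1: "((\<lambda>k. kdot k x * expw \<theta> k) has_sum (\<mu> * Z \<theta>)) UNIV"
    using has_sum_kdot_expw[OF fm, of x] Z0 unfolding \<mu>_def mean_def by (simp add: sum_distrib_right)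
  have hsum: "((\<lambda>k. ((kdot k x)\<^sup>2 * expw \<theta> k + \<mu>\<^sup>2 * expw \<theta> k) - 2 * \<mu> * (kdot k x * expw \<theta> k))
      has_sum ((X + \<mu>\<^sup>2 * Z \<theta>) - 2 * \<mu> * (\<mu> * Z \<theta>))) UNIV"
    by (intro has_sum_diff has_sum_add has_sum_cmult_right h1 h2 has_sum_Z s0)
  have "(\<Sum>i\<in>UNIV. \<Sum>j\<in>UNIV. x $ i * x $ j * cov \<theta> i j)
      = (\<Sum>i\<in>UNIV. \<Sum>j\<in>UNIV. x $ i * x $ j * mom2 i j \<theta> / Z \<theta> - (x $ i * mean \<theta> i) * (x $ j * mean \<theta> j))"
    unfolding cov_def by (simp add: algebra_simps)
  also have "\<dots> = X / Z \<theta> - \<mu>\<^sup>2"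
    unfolding X_def \<mu>_def by (simp add: sum_subtractf sum_divide_distrib power2_eq_square sum_product)
  finally have val: "(X + \<mu>\<^sup>2 * Z \<theta>) - 2 * \<mu> * (\<mu> * Z \<theta>) = Z \<theta> * (\<Sum>i\<in>UNIV. \<Sum>j\<in>UNIV. x $ i * x $ j * cov \<theta> i j)"
    using Z0 by (simp add: field_simps power2_eq_square)
  have "(\<lambda>k. ((kdot k x)\<^sup>2 * expw \<theta> k + \<mu>\<^sup>2 * expw \<theta> k) - 2 * \<mu> * (kdot k x * expw \<theta> k))
      = (\<lambda>k. (kdot k x - \<mu>)\<^sup>2 * expw \<theta> k)"
    by (simp add: fun_eq_iff power2_eq_square algebra_simps)
  with hsum show ?thesis unfolding val by simp
qed

lemma cov_pos_definite:
  assumes "\<theta> \<in> reg_dom" and "x \<noteq> 0"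
  shows "0 < (\<Sum>i\<in>UNIV. \<Sum>j\<in>UNIV. x $ i * x $ j * cov \<theta> i j)"
proof -
  define \<mu> where "\<mu> = (\<Sum>i\<in>UNIV. x $ i * mean \<theta> i)"
  define Q where "Q k = (kdot k x - \<mu>)\<^sup>2 * expw \<theta> k" for k
  have hQ: "(Q has_sum (Z \<theta> * (\<Sum>i\<in>UNIV. \<Sum>j\<in>UNIV. x $ i * x $ j * cov \<theta> i j))) UNIV"
    unfolding Q_def \<mu>_def by (rule has_sum_centered_square[OF assms(1)])
  obtain k0 where k0: "0 < Q k0"
  proof (cases "\<mu> = 0")
    case False
    then have "0 < Q (\<lambda>_. 0)" unfolding Q_def by (simp add: kdot_zero_config expw_zero_config)
    then show ?thesis by (rule that)
  next
    case True
    obtain i where "x $ i \<noteq> 0" using assms(2) by (auto simp: vec_eq_iff)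
    then have "0 < Q (unit_config i)"
      unfolding Q_def True using expw_pos[of \<theta> "unit_config i"] by (simp add: kdot_unit_config)
    then show ?thesis by (rule that)
  qed
  have "0 < Z \<theta> * (\<Sum>i\<in>UNIV. \<Sum>j\<in>UNIV. x $ i * x $ j * cov \<theta> i j)"
    by (rule has_sum_pos_if_term_pos[of Q UNIV _ k0, OF hQ])
       (simp_all add: Q_def expw_nonneg k0[unfolded Q_def])
  moreover have "0 < Z \<theta>"
    using Z_pos finite_moments_if_reg_dom[OF assms(1)] unfolding finite_moments_def by blast
  ultimately show ?thesis by (simp add: zero_less_mult_iff)
qed

lemma Cov_invertible:
  assumes "\<theta> \<in> reg_dom"
  shows "invertible (Cov \<theta>)"
  unfolding invertible_left_inverse matrix_left_invertible_ker
proof (intro allI impI)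
  fix x assume "Cov \<theta> *v x = 0"
  then have "(\<Sum>j\<in>UNIV. cov \<theta> i j * x $ j) = 0" for i
    by (simp add: Cov_def matrix_vector_mult_def vec_eq_iff)
  moreover have "(\<Sum>i\<in>UNIV. \<Sum>j\<in>UNIV. x $ i * x $ j * cov \<theta> i j)
      = (\<Sum>i\<in>UNIV. x $ i * (\<Sum>j\<in>UNIV. cov \<theta> i j * x $ j))"
    by (simp add: sum_distrib_left mult_ac)
  ultimately have "(\<Sum>i\<in>UNIV. \<Sum>j\<in>UNIV. x $ i * x $ j * cov \<theta> i j) = 0" by simp
  then show "x = 0" using cov_pos_definite[OF assms, of x] by force
qed

section \<open>Interior densities have regular log-fugacities\<close>

lemma convex_summable_dom: "convex {\<theta>. expw \<theta> summable_on UNIV}"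
  unfolding convex_alt
proof (intro ballI allI impI, simp only: mem_Collect_eq)
  fix x y :: "real^'n" and u :: real
  assume x: "expw x summable_on UNIV" and y: "expw y summable_on UNIV" and u: "0 \<le> u \<and> u \<le> 1"
  have "expw ((1 - u) *\<^sub>R x + u *\<^sub>R y) k \<le> (1 - u) * expw x k + u * expw y k" for k
  proof -
    have "exp (kdot k ((1 - u) *\<^sub>R x + u *\<^sub>R y)) \<le> (1 - u) * exp (kdot k x) + u * exp (kdot k y)"
      using convex_onD[OF exp_convex, of u "kdot k x" "kdot k y"] u by (simp add: kdot_add kdot_scaleR)
    then have "exp (kdot k ((1 - u) *\<^sub>R x + u *\<^sub>R y)) / gfact g k
        \<le> ((1 - u) * exp (kdot k x) + u * exp (kdot k y)) / gfact g k"
      by (rule divide_right_mono) (use gfact_pos[of k] in simp)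
    then show ?thesis unfolding expw_def by (simp add: add_divide_distrib)
  qed
  then show "expw ((1 - u) *\<^sub>R x + u *\<^sub>R y) summable_on UNIV"
    by (intro summable_on_comparison_test[OF summable_on_add[OF summable_on_cmult_right[OF x]
          summable_on_cmult_right[OF y]]] expw_nonneg)
qed

text \<open>Apply the separating hyperplane theorem to the convex set
  \<open>{\<theta>\<^sub>0 - \<theta> + t\<one> | \<theta> summable, t > 0}\<close>, which avoids \<open>0\<close> exactly when \<open>\<theta>\<^sub>0 \<notin> reg_dom\<close>.\<close>

lemma separating_direction:
  assumes "\<theta>\<^sub>0 \<notin> reg_dom"
  obtains a where "a \<noteq> 0" "\<And>\<theta>. expw \<theta> summable_on UNIV \<Longrightarrow> inner a (\<theta> - \<theta>\<^sub>0) \<le> 0"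
proof -
  define S where "S = {\<theta>. expw \<theta> summable_on UNIV}"
  define E where "E = (+) \<theta>\<^sub>0 ` (\<Union>x \<in> uminus ` S. \<Union>y \<in> (\<lambda>t. t *\<^sub>R ones) ` {0::real<..}. {x + y})"
  have "convex E"
    unfolding E_def S_def
    by (rule convex_translation[OF convex_sums[OF convex_negations[OF convex_summable_dom]
          convex_scaled[OF convex_real_interval(3)]]])
  moreover have "0 \<notin> E"
  proof
    assume "0 \<in> E"
    then obtain \<theta> t where "\<theta> \<in> S" "0 < t" "0 = \<theta>\<^sub>0 + (- \<theta> + t *\<^sub>R ones)"
      unfolding E_def by auto
    then have "\<theta>\<^sub>0 \<in> reg_dom" unfolding reg_dom_def S_def by (auto simp: algebra_simps)
    then show False using assms by simp
  qed
  ultimately obtain a where a: "a \<noteq> 0" "\<And>x. x \<in> E \<Longrightarrow> 0 \<le> inner a x"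
    using separating_hyperplane_set_0[of E] by metis
  show ?thesis
  proof (rule that[OF a(1)])
    fix \<theta> assume "expw \<theta> summable_on UNIV"
    then have mem: "\<theta>\<^sub>0 + (- \<theta> + t *\<^sub>R ones) \<in> E" if "0 < t" for t
      unfolding E_def S_def using that by (intro imageI UN_I[of "- \<theta>"] UN_I[of "t *\<^sub>R ones"]) auto
    have le: "inner a (\<theta> - \<theta>\<^sub>0) \<le> t * \<bar>inner a ones\<bar>" if "0 < t" for t
    proof -
      have "0 \<le> inner a (\<theta>\<^sub>0 + (- \<theta> + t *\<^sub>R ones))" by (rule a(2)[OF mem[OF that]])
      then have "inner a (\<theta> - \<theta>\<^sub>0) \<le> t * inner a ones"
        by (simp add: inner_add_right inner_diff_right)
      also have "\<dots> \<le> t * \<bar>inner a ones\<bar>" using that by (simp add: mult_left_mono)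
      finally show ?thesis .
    qed
    show "inner a (\<theta> - \<theta>\<^sub>0) \<le> 0"
    proof (rule ccontr)
      define d where "d = inner a (\<theta> - \<theta>\<^sub>0)"
      assume "\<not> inner a (\<theta> - \<theta>\<^sub>0) \<le> 0"
      then have d: "0 < d" unfolding d_def by simp
      have "d \<le> d / (\<bar>inner a ones\<bar> + 1) * \<bar>inner a ones\<bar>"
        using le[of "d / (\<bar>inner a ones\<bar> + 1)"] d unfolding d_def by simp
      also have "\<dots> < d" using d by (simp add: field_simps)
      finally show False by simp
    qed
  qed
qed

text \<open>Moving the mean from \<open>mean_vec \<theta>\<^sub>0\<close> along a separating direction produces, by strict
  monotonicity of the mean map, a summable parameter on the wrong side of the hyperplane.\<close>

lemma reg_dom_if_mean_covers_ball:
  assumes fm0: "finite_moments \<theta>\<^sub>0" and r: "0 < r"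
    and cover: "\<And>a. a \<in> ball (mean_vec \<theta>\<^sub>0) r \<Longrightarrow> \<exists>\<theta>. finite_moments \<theta> \<and> mean_vec \<theta> = a"
  shows "\<theta>\<^sub>0 \<in> reg_dom"
proof (rule ccontr)
  assume "\<theta>\<^sub>0 \<notin> reg_dom"
  then obtain a where a: "a \<noteq> 0" and sep: "\<And>\<theta>. expw \<theta> summable_on UNIV \<Longrightarrow> inner a (\<theta> - \<theta>\<^sub>0) \<le> 0"
    using separating_direction by blast
  define \<delta> where "\<delta> = r / (2 * norm a)"
  have \<delta>: "0 < \<delta>" "\<delta> * norm a < r" using r a by (simp_all add: \<delta>_def)
  then have "mean_vec \<theta>\<^sub>0 + \<delta> *\<^sub>R a \<in> ball (mean_vec \<theta>\<^sub>0) r" by (simp add: dist_norm)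
  then obtain \<theta> where fm: "finite_moments \<theta>" and m: "mean_vec \<theta> = mean_vec \<theta>\<^sub>0 + \<delta> *\<^sub>R a"
    using cover by blast
  have "\<theta> \<noteq> \<theta>\<^sub>0" using m a \<delta> by auto
  then have "0 < (\<Sum>i\<in>UNIV. (\<theta> - \<theta>\<^sub>0) $ i * (mean \<theta> i - mean \<theta>\<^sub>0 i))"
    by (rule mean_strict_mono[OF fm fm0])
  also have "\<dots> = \<delta> * inner a (\<theta> - \<theta>\<^sub>0)"
    using m unfolding mean_vec_def inner_vec_def
    by (simp add: vec_eq_iff sum_distrib_left algebra_simps)
  also have "\<dots> \<le> 0"
    using sep[of \<theta>] fm \<delta>(1) unfolding finite_moments_def by (simp add: mult_nonneg_nonpos)
  finally show False by simp
qed

end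

definition vexp :: "real^'n::finite \<Rightarrow> real^'n" where
  "vexp \<theta> = (\<chi> i. exp (\<theta> $ i))"

definition vlog :: "real^'n::finite \<Rightarrow> real^'n" where
  "vlog \<phi> = (\<chi> i. ln (\<phi> $ i))"

lemma vexp_vlog: "(\<And>i. 0 < \<phi> $ i) \<Longrightarrow> vexp (vlog \<phi>) = \<phi>"
  by (simp add: vexp_def vlog_def vec_eq_iff)

lemma vlog_vexp: "vlog (vexp \<theta>) = \<theta>"
  by (simp add: vexp_def vlog_def vec_eq_iff)

context zero_range_rates
begin

lemma wt_vexp: "wt g (vexp \<theta>) = expw \<theta>"
proof
  fix k
  have "(\<Prod>i\<in>UNIV. exp (\<theta> $ i) ^ k i) = (\<Prod>i\<in>UNIV. exp (real (k i) * \<theta> $ i))"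
    by (rule prod.cong) (simp_all add: exp_of_nat_mult)
  also have "\<dots> = exp (kdot k \<theta>)" by (simp add: kdot_def exp_sum)
  finally show "wt g (vexp \<theta>) k = expw \<theta> k" by (simp add: wt_def expw_def vexp_def)
qed

lemma Efug_vexp: "Efug g (vexp \<theta>) f = infsum (\<lambda>k. f k * expw \<theta> k) UNIV / Z \<theta>"
  by (simp add: Efug_def Zpart_def Z_def wt_vexp)

lemma is_fugacity_vexp_iff: "is_fugacity g a (vexp \<theta>) \<longleftrightarrow> finite_moments \<theta> \<and> mean_vec \<theta> = a"
  unfolding is_fugacity_def finite_moments_def wt_vexp Efug_vexp mean_vec_def mean_def mom1_def
  by (auto simp: vexp_def vec_eq_iff mult.commute less_imp_le)

lemma fugacity_pos:
  assumes f: "is_fugacity g a \<phi>" and ai: "0 < a $ i"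
  shows "0 < \<phi> $ i"
proof (rule ccontr)
  assume "\<not> 0 < \<phi> $ i"
  with f have z: "\<phi> $ i = 0" unfolding is_fugacity_def by (meson antisym not_le)
  have "real (k i) * wt g \<phi> k = 0" for k
    using z by (cases "k i = 0") (auto simp: wt_def intro!: prod_zero)
  then have "Efug g \<phi> (\<lambda>k. real (k i)) = 0" by (simp add: Efug_def infsum_0)
  then show False using f ai unfolding is_fugacity_def by auto
qed

lemma fugacityE:
  assumes f: "is_fugacity g a \<phi>" and pos: "\<And>i. 0 < a $ i"
  obtains \<theta> where "\<phi> = vexp \<theta>" "finite_moments \<theta>" "mean_vec \<theta> = a"
proof -
  have "\<phi> = vexp (vlog \<phi>)" using fugacity_pos[OF f pos] vexp_vlog by metis
  with f show ?thesis using that is_fugacity_vexp_iff by metis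
qed

lemma Phi_vexp:
  assumes pos: "\<And>i. 0 < a $ i" and f: "is_fugacity g a (vexp \<theta>)"
  shows "Phi g a = vexp \<theta>"
  unfolding Phi_def
proof (rule the_equality)
  show "is_fugacity g a (vexp \<theta>)" by (rule f)
next
  fix \<phi> assume "is_fugacity g a \<phi>"
  then obtain \<theta>' where "\<phi> = vexp \<theta>'" "finite_moments \<theta>'" "mean_vec \<theta>' = a"
    using pos by (rule fugacityE)
  moreover have "finite_moments \<theta>" "mean_vec \<theta> = a" using f is_fugacity_vexp_iff by auto
  ultimately have "\<theta>' = \<theta>" using mean_inj[of \<theta>' \<theta>] by (simp add: mean_vec_def vec_eq_iff)
  with \<open>\<phi> = vexp \<theta>'\<close> show "\<phi> = vexp \<theta>" by simp
qed

text \<open>The mean rate equals the fugacity: substituting \<open>k = inc k' i\<close> (configurations with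
  \<open>k i = 0\<close> do not contribute), the rate \<open>g i k\<close> cancels against \<open>g!\<close>.\<close>

lemma infsum_rate_expw: "infsum (\<lambda>k. g i k * expw \<theta> k) UNIV = exp (\<theta> $ i) * Z \<theta>"
proof -
  have "infsum (\<lambda>k. g i k * expw \<theta> k) UNIV = infsum (\<lambda>k. g i k * expw \<theta> k) (range (\<lambda>k. inc k i))"
  proof (rule infsum_cong_neutral)
    fix k assume "k \<in> UNIV - range (\<lambda>k. inc k i)"
    then have "k i = 0" using inc_dec[of k i] by (metis DiffD2 gr0I rangeI)
    then show "g i k * expw \<theta> k = 0" using zr unfolding zr_rates_def by simp
  qed auto
  also have "\<dots> = infsum ((\<lambda>k. g i k * expw \<theta> k) \<circ> (\<lambda>k. inc k i)) UNIV"
    by (rule infsum_reindex) (use inj_inc in \<open>simp add: inj_on_def\<close>)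
  also have "\<dots> = infsum (\<lambda>k. exp (\<theta> $ i) * expw \<theta> k) UNIV"
  proof (rule infsum_cong)
    fix k
    have "0 < g i (inc k i)" using zr unfolding zr_rates_def by (simp add: inc_def)
    moreover have "gfact g (inc k i) = g i (inc k i) * gfact g k"
      using gfact_step[of "inc k i" i] by (simp add: inc_def dec_inc[unfolded inc_def])
    ultimately show "((\<lambda>k. g i k * expw \<theta> k) \<circ> (\<lambda>k. inc k i)) k = exp (\<theta> $ i) * expw \<theta> k"
      using gfact_pos[of k] by (simp add: expw_def kdot_inc exp_add field_simps)
  qed
  also have "\<dots> = exp (\<theta> $ i) * Z \<theta>" by (simp add: infsum_cmult_right' Z_def)
  finally show ?thesis .
qed

lemma gtilde_Gamma_vexp:
  assumes pos: "\<And>i. 0 < a $ i" and f: "is_fugacity g a (vexp \<theta>)"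
  shows "gtilde g i a = exp (\<theta> $ i)" "Gamma g a i j = cov \<theta> i j"
proof -
  have P: "Phi g a = vexp \<theta>" by (rule Phi_vexp[OF pos f])
  have "expw \<theta> summable_on UNIV" using f is_fugacity_vexp_iff finite_moments_def by blast
  then show "gtilde g i a = exp (\<theta> $ i)"
    unfolding gtilde_def Enu_def P Efug_vexp infsum_rate_expw using Z_pos by fastforce
  show "Gamma g a i j = cov \<theta> i j"
    unfolding Gamma_def Enu_def P Efug_vexp cov_def mean_def mom2_def mom1_def by (simp add: mult_ac)
qed

end

section \<open>The frame condition\<close>

lemma positive_ball_in_interior:
  fixes a\<^sub>0 :: "real^'n::finite"
  assumes "a\<^sub>0 \<in> interior D" and "\<And>i. 0 < a\<^sub>0 $ i"
  obtains r where "0 < r" "\<And>a. a \<in> ball a\<^sub>0 r \<Longrightarrow> a \<in> D \<and> (\<forall>i. 0 < a $ i)"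
proof -
  obtain r where r: "0 < r" "ball a\<^sub>0 r \<subseteq> D" using assms(1) mem_interior by blast
  define m where "m = Min (range (\<lambda>i. a\<^sub>0 $ i))"
  have m: "0 < m" "\<And>i. m \<le> a\<^sub>0 $ i" unfolding m_def using assms(2) by auto
  show ?thesis
  proof (rule that[of "min r m"])
    fix a assume a: "a \<in> ball a\<^sub>0 (min r m)"
    have "0 < a $ i" for i
      using component_le_norm_cart[of "a\<^sub>0 - a" i] a m(2)[of i] by (simp add: dist_norm abs_le_iff)
    then show "a \<in> D \<and> (\<forall>i. 0 < a $ i)" using a r by auto
  qed (use r m in simp)
qed

lemma has_partial_iff:
  fixes f :: "real^'n::finite \<Rightarrow> real"
  assumes "(f has_derivative f') (at a)"
  shows "has_partial f j c a \<longleftrightarrow> c = f' (axis j 1)"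
proof -
  have "((\<lambda>t. a + t *\<^sub>R axis j (1::real)) has_derivative (\<lambda>t. t *\<^sub>R axis j 1)) (at 0)"
    by (intro derivative_eq_intros) auto
  from has_derivative_compose[OF this, of f] assms
  have "((\<lambda>t. f (a + t *\<^sub>R axis j 1)) has_derivative (\<lambda>t. f' (t *\<^sub>R axis j 1))) (at 0)" by simp
  moreover have "(\<lambda>t. f' (t *\<^sub>R axis j 1)) = (*) (f' (axis j 1))"
    using linear_scale[OF has_derivative_linear[OF assms]] by (simp add: fun_eq_iff)
  ultimately have "((\<lambda>t. f (a + t *\<^sub>R axis j 1)) has_real_derivative f' (axis j 1)) (at 0)"
    by (simp add: has_field_derivative_def)
  then show ?thesis unfolding has_partial_def using DERIV_unique by blast
qed

context zero_range_rates
begin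

lemma log_fugacity:
  assumes "a \<in> Phi_dom g" and "\<And>i. 0 < a $ i"
  shows "is_fugacity g a (vexp (vlog (Phi g a)))" "finite_moments (vlog (Phi g a))"
    "mean_vec (vlog (Phi g a)) = a"
proof -
  obtain \<phi> where "is_fugacity g a \<phi>" using assms(1) unfolding Phi_dom_def by auto
  then obtain \<theta> where \<theta>: "is_fugacity g a (vexp \<theta>)" "finite_moments \<theta>" "mean_vec \<theta> = a"
    using assms(2) by (metis fugacityE)
  then have "vlog (Phi g a) = \<theta>" using Phi_vexp[OF assms(2)] vlog_vexp by metis
  then show "is_fugacity g a (vexp (vlog (Phi g a)))" "finite_moments (vlog (Phi g a))"
    "mean_vec (vlog (Phi g a)) = a" using \<theta> by simp_all
qed

lemma vlog_Phi_mean_vec: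
  assumes "finite_moments \<theta>"
  shows "vlog (Phi g (mean_vec \<theta>)) = \<theta>"
proof -
  have "0 < mean_vec \<theta> $ i" for i using mean_pos[OF assms] by (simp add: mean_vec_def)
  then show ?thesis using Phi_vexp is_fugacity_vexp_iff assms vlog_vexp by metis
qed

text \<open>Inverse function theorem for the mean map: near \<open>a\<^sub>0\<close> the log-fugacity \<open>vlog \<circ> Phi g\<close>
  inverts \<open>mean_vec\<close>, whose derivative \<open>Cov\<close> is invertible.\<close>

lemma gtilde_has_derivative:
  assumes pos: "\<And>i. 0 < a\<^sub>0 $ i" and int: "a\<^sub>0 \<in> interior (Phi_dom g)"
  defines "\<theta>\<^sub>0 \<equiv> vlog (Phi g a\<^sub>0)"
  obtains B where "Cov \<theta>\<^sub>0 ** B = mat 1" "B ** Cov \<theta>\<^sub>0 = mat 1"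
    "\<And>i. (gtilde g i has_derivative (\<lambda>h. exp (\<theta>\<^sub>0 $ i) * (B *v h) $ i)) (at a\<^sub>0)"
proof -
  obtain r where r: "0 < r" "\<And>a. a \<in> ball a\<^sub>0 r \<Longrightarrow> a \<in> Phi_dom g \<and> (\<forall>i. 0 < a $ i)"
    using positive_ball_in_interior[OF int pos] by blast
  have a0: "finite_moments \<theta>\<^sub>0" "mean_vec \<theta>\<^sub>0 = a\<^sub>0"
    using log_fugacity r by (auto simp: \<theta>\<^sub>0_def)
  have reg: "\<theta>\<^sub>0 \<in> reg_dom"
    by (rule reg_dom_if_mean_covers_ball[OF a0(1) r(1)]) (use a0(2) r(2) log_fugacity in metis)
  obtain B where B: "Cov \<theta>\<^sub>0 ** B = mat 1" "B ** Cov \<theta>\<^sub>0 = mat 1"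
    using Cov_invertible[OF reg] unfolding invertible_def by blast
  have "((\<lambda>a. vlog (Phi g a)) has_derivative (\<lambda>h. B *v h)) (at (mean_vec \<theta>\<^sub>0))"
  proof (rule has_derivative_inverse_strong[OF open_reg_dom reg continuous_on_mean_vec _
        mean_vec_has_derivative[OF reg]])
    show "vlog (Phi g (mean_vec \<theta>)) = \<theta>" if "\<theta> \<in> reg_dom" for \<theta>
      by (rule vlog_Phi_mean_vec[OF finite_moments_if_reg_dom[OF that]])
    show "(\<lambda>h. Cov \<theta>\<^sub>0 *v h) \<circ> (\<lambda>h. B *v h) = id"
      using B(1) by (simp add: fun_eq_iff matrix_vector_mul_assoc)
  qed
  then have dlog: "((\<lambda>a. vlog (Phi g a) $ i) has_derivative (\<lambda>h. (B *v h) $ i)) (at a\<^sub>0)" for i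
    unfolding a0(2) by (rule bounded_linear.has_derivative[OF bounded_linear_vec_nth])
  have "(gtilde g i has_derivative (\<lambda>h. exp (\<theta>\<^sub>0 $ i) * (B *v h) $ i)) (at a\<^sub>0)" for i
  proof (rule has_derivative_transform_within_open[OF _ open_ball centre_in_ball[THEN iffD2, OF r(1)]])
    show "((\<lambda>a. exp (vlog (Phi g a) $ i)) has_derivative (\<lambda>h. exp (\<theta>\<^sub>0 $ i) * (B *v h) $ i)) (at a\<^sub>0)"
      using has_derivative_exp[OF dlog[of i]] by (simp add: \<theta>\<^sub>0_def mult.commute)
    show "exp (vlog (Phi g a) $ i) = gtilde g i a" if "a \<in> ball a\<^sub>0 r" for a
      using gtilde_Gamma_vexp(1) log_fugacity(1) r(2)[OF that] by metis
  qed
  then show ?thesis using that B by blast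
qed

lemma FC_with_iff:
  assumes pos: "\<And>i. 0 < a\<^sub>0 $ i" and int: "a\<^sub>0 \<in> interior (Phi_dom g)"
  shows "FC_with g a\<^sub>0 c \<longleftrightarrow>
           (\<forall>i j. i \<noteq> j \<longrightarrow> Gamma g a\<^sub>0 i j = 0) \<and> (\<forall>i. gtilde g i a\<^sub>0 / Gamma g a\<^sub>0 i i = c)"
proof -
  define \<theta>\<^sub>0 where "\<theta>\<^sub>0 = vlog (Phi g a\<^sub>0)"
  obtain B where B: "Cov \<theta>\<^sub>0 ** B = mat 1" "B ** Cov \<theta>\<^sub>0 = mat 1"
    and dg: "\<And>i. (gtilde g i has_derivative (\<lambda>h. exp (\<theta>\<^sub>0 $ i) * (B *v h) $ i)) (at a\<^sub>0)"
    using gtilde_has_derivative[OF pos int] unfolding \<theta>\<^sub>0_def by blast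
  have "is_fugacity g a\<^sub>0 (vexp \<theta>\<^sub>0)"
    unfolding \<theta>\<^sub>0_def by (rule log_fugacity(1)[OF interior_subset[THEN subsetD, OF int] pos])
  then have gt: "gtilde g i a\<^sub>0 = exp (\<theta>\<^sub>0 $ i)" and Ga: "Gamma g a\<^sub>0 i j = Cov \<theta>\<^sub>0 $ i $ j" for i j
    using gtilde_Gamma_vexp[OF pos] by (simp_all add: Cov_def)
  have partial: "has_partial (gtilde g i) j c a\<^sub>0 \<longleftrightarrow> c = exp (\<theta>\<^sub>0 $ i) * B $ i $ j" for i j c
    unfolding has_partial_iff[OF dg]
    by (simp add: matrix_vector_mult_def axis_def if_distrib cong: if_cong)
  have "FC_with g a\<^sub>0 c \<longleftrightarrow> (\<forall>i j. exp (\<theta>\<^sub>0 $ i) * B $ i $ j = (if i = j then c else 0))"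
    unfolding FC_with_def partial by auto
  also have "\<dots> \<longleftrightarrow> (\<forall>i j. i \<noteq> j \<longrightarrow> Cov \<theta>\<^sub>0 $ i $ j = 0) \<and> (\<forall>i. exp (\<theta>\<^sub>0 $ i) / Cov \<theta>\<^sub>0 $ i $ i = c)"
    by (rule scaled_inverse_diagonal_iff[OF B]) simp
  finally show ?thesis unfolding gt Ga .
qed

end

theorem proposition4p2:
  fixes g :: "'n::finite \<Rightarrow> ('n \<Rightarrow> nat) \<Rightarrow> real" and a0 :: "real^'n"
  assumes "zr_rates g" and "INV g"
    and "\<forall>i. 0 < a0 $ i"
    and "a0 \<in> interior (Phi_dom g)"
  shows "(FC g a0 \<longleftrightarrow>
           (\<forall>i j. i \<noteq> j \<longrightarrow> Gamma g a0 i j = 0) \<and>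
           (\<exists>c. \<forall>i. gtilde g i a0 / Gamma g a0 i i = c))
       \<and> (\<forall>lam. FC_with g a0 lam \<longrightarrow> (\<forall>i. gtilde g i a0 / Gamma g a0 i i = lam))"
proof -
  interpret zero_range_rates g using assms(1,2) by unfold_locales
  have pos: "\<And>i. 0 < a0 $ i" using assms(3) by blast
  have iff: "FC_with g a0 c \<longleftrightarrow>
      (\<forall>i j. i \<noteq> j \<longrightarrow> Gamma g a0 i j = 0) \<and> (\<forall>i. gtilde g i a0 / Gamma g a0 i i = c)" for c
    by (rule FC_with_iff[OF pos assms(4)])
  show ?thesis unfolding FC_def iff by auto
qed

end
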